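(* Let $b\ge1$ and suppose that for some vector $v_{b-1}\in\mathbb{R}^{2^{b-1}}$ and some real sequence $a(j)$, $j=0,\dots,b-1$, the identity $$v_{b-1}'\,\Omega_{b-1}\,u_{b-1}=\frac{1}{2^{b-1}}\sum_{j=0}^{b-1}\binom{b-1}{j}a(j)x_j$$ holds (as polynomials in the variables $x_0,x_1,\dots$). Then $$(u_1\otimes v_{b-1})'\,\Omega_b\,u_b=\frac1{2^b}\sum_{j=0}^b\binom bj a_u(j)x_j,\qquad a_u(j)=\frac{b-j}{b}a(j)+\frac jb a(j-1),$$ and $$(w_1\otimes v_{b-1})'\,\Omega_b\,u_b=\frac1{2^b}\sum_{j=0}^b\binom bj a_w(j)x_j,\qquad a_w(j)=\frac{b-j}{b}a(j)-\frac jb a(j-1),$$ where the undefined values $a(-1)$ and $a(b)$ appear only with zero coefficients.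
   Context: Let $T=\frac1{\sqrt2}\begin{pmatrix}1&1\\-1&1\end{pmatrix}$, $e_0=(1,0)'$, $e_1=(0,1)'$, $u_1=Te_0=\frac1{\sqrt2}(1,-1)'$, $w_1=Te_1=\frac1{\sqrt2}(1,1)'$, and $u_t=u_1^{\otimes t}=(\otimes^tT)e_0^{\otimes t}$ ($u_0=1$). The vectors $\mathbf{a}_t$ of length $2^t$ are defined by $\mathbf{a}_1=(0,1)$ and $\mathbf{a}_t=(\mathbf{a}_{t-1},\mathbf{a}_{t-1}+\mathbf{1})$ (adding $1$ to each entry); $a_k$ is the $k$-th entry of $\mathbf{a}_t$ for any $t$ with $2^t\ge k$. With formal variables $x_0,x_1,\dots$, let $\Omega_{t,j}=\mathrm{diag}(x_{a_1+j},\dots,x_{a_{2^t}+j})$ and $\Omega_t=\Omega_{t,0}$ ($\Omega_0=x_0$). *)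

theory Defs
  imports Complex_Main
begin

text \<open>Vectors of length 2^t are represented as functions nat \<Rightarrow> real, indexed
  0..2^t-1 (entry k of the paper is index k-1 here); entries outside the range are
  irrelevant.  Linear forms in the formal variables x_0, x_1, ... are compared by
  evaluating at every real assignment x :: nat \<Rightarrow> real.\<close>

definition kron :: "nat \<Rightarrow> (nat \<Rightarrow> real) \<Rightarrow> (nat \<Rightarrow> real) \<Rightarrow> nat \<Rightarrow> real" where
  "kron m u v = (\<lambda>i. u (i div m) * v (i mod m))"

definition u1 :: "nat \<Rightarrow> real" where
  "u1 = (\<lambda>i. if i = 0 then 1 / sqrt 2 else if i = 1 then - 1 / sqrt 2 else 0)"

definition w1 :: "nat \<Rightarrow> real" where
  "w1 = (\<lambda>i. if i = 0 then 1 / sqrt 2 else if i = 1 then 1 / sqrt 2 else 0)"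

fun uvec :: "nat \<Rightarrow> nat \<Rightarrow> real" where
  "uvec 0 = (\<lambda>i. if i = 0 then 1 else 0)"
| "uvec (Suc t) = kron (2 ^ t) u1 (uvec t)"

fun avec :: "nat \<Rightarrow> nat list" where
  "avec 0 = [0]"
| "avec (Suc t) = avec t @ map Suc (avec t)"

text \<open>Omega_t = diag(x_{a_1},...,x_{a_{2^t}}) as diagonal entries.\<close>
definition Omega :: "nat \<Rightarrow> (nat \<Rightarrow> real) \<Rightarrow> nat \<Rightarrow> real" where
  "Omega t x i = x (avec t ! i)"

definition bform :: "nat \<Rightarrow> (nat \<Rightarrow> real) \<Rightarrow> (nat \<Rightarrow> real) \<Rightarrow> (nat \<Rightarrow> real) \<Rightarrow> real" where
  "bform t v x u = (\<Sum>i<2 ^ t. v i * Omega t x i * u i)"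

end

theory Submission
  imports Defs
begin

text \<open>Since \<open>u\<^sub>b = u\<^sub>1 \<otimes> u\<^sub>b\<^sub>-\<^sub>1\<close> and \<open>a\<^sub>b = (a\<^sub>b\<^sub>-\<^sub>1, a\<^sub>b\<^sub>-\<^sub>1 + 1)\<close>, the form
  \<open>(y \<otimes> v)' \<Omega>\<^sub>b u\<^sub>b\<close> splits into the two halves of the index range: the first is
  the hypothesis at \<open>x\<close>, the second the hypothesis at the shifted variables
  \<open>x\<^sub>j\<^sub>+\<^sub>1\<close>, weighted by \<open>y\<^sub>0 u\<^sub>1\<^sub>,\<^sub>0 = 1/2\<close> and \<open>y\<^sub>1 u\<^sub>1\<^sub>,\<^sub>1 = \<mp>1/2\<close>. Collecting
  the coefficient of \<open>x\<^sub>j\<close> then amounts to Pascal's rule in the weighted forms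
  \<open>C(b,j)(b-j)/b = C(b-1,j)\<close> and \<open>C(b,j) j/b = C(b-1,j-1)\<close>.\<close>

lemma length_avec: "length (avec t) = 2 ^ t"
  by (induction t) auto

lemma sum_lessThan_add:
  fixes f :: "nat \<Rightarrow> 'a::comm_monoid_add"
  shows "(\<Sum>i<m + n. f i) = (\<Sum>i<m. f i) + (\<Sum>i<n. f (m + i))"
  by (induction n) (auto simp: add.assoc)

lemma bform_kron:
  "bform (Suc c) (kron (2 ^ c) y v) x (kron (2 ^ c) z u)
   = y 0 * z 0 * bform c v x u + y 1 * z 1 * bform c v (\<lambda>k. x (Suc k)) u"
proof -
  let ?m = "2 ^ c :: nat"
  have "bform (Suc c) (kron ?m y v) x (kron ?m z u)
      = (\<Sum>i<?m + ?m. y (i div ?m) * v (i mod ?m) * x (avec (Suc c) ! i) * (z (i div ?m) * u (i mod ?m)))"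
    by (simp add: bform_def Omega_def kron_def mult_2)
  also have "\<dots> = (\<Sum>i<?m. y 0 * v i * x (avec c ! i) * (z 0 * u i))
     + (\<Sum>i<?m. y 1 * v i * x (Suc (avec c ! i)) * (z 1 * u i))"
    unfolding sum_lessThan_add
    by (intro arg_cong2[where f="(+)"] sum.cong) (auto simp: nth_append length_avec)
  also have "\<dots> = y 0 * z 0 * bform c v x u + y 1 * z 1 * bform c v (\<lambda>k. x (Suc k)) u"
    by (simp add: bform_def Omega_def sum_distrib_left algebra_simps)
  finally show ?thesis .
qed

lemma sum_choose_Suc_comp_ratio:
  fixes f :: "nat \<Rightarrow> real"
  shows "(\<Sum>j\<le>Suc c. real (Suc c choose j) * ((real (Suc c) - real j) / real (Suc c)) * f j)
       = (\<Sum>j\<le>c. real (c choose j) * f j)"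
proof -
  have "real (Suc c choose j) * ((real (Suc c) - real j) / real (Suc c)) = real (c choose j)"
    if "j \<le> Suc c" for j
  proof -
    have "real (Suc c - j) * real (Suc c choose j) = real (Suc c) * real (c choose j)"
      using binomial_absorb_comp[of "Suc c" j] by (metis diff_Suc_1 of_nat_mult)
    then show ?thesis using that by (simp add: field_simps of_nat_diff)
  qed
  then have "(\<Sum>j\<le>Suc c. real (Suc c choose j) * ((real (Suc c) - real j) / real (Suc c)) * f j)
       = (\<Sum>j\<le>Suc c. real (c choose j) * f j)"
    by (intro sum.cong) auto
  then show ?thesis by simp
qed

lemma sum_choose_Suc_ratio_shift:
  fixes g :: "nat \<Rightarrow> real"
  shows "(\<Sum>j\<le>Suc c. real (Suc c choose j) * (real j / real (Suc c)) * g (j - 1))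
       = (\<Sum>j\<le>c. real (c choose j) * g j)"
proof -
  have "real (Suc c choose Suc k) * (real (Suc k) / real (Suc c)) = real (c choose k)" for k
  proof -
    have "real (Suc k) * real (Suc c choose Suc k) = real (Suc c) * real (c choose k)"
      by (metis Suc_times_binomial of_nat_mult)
    then show ?thesis by (simp add: field_simps)
  qed
  then show ?thesis
    by (simp only: sum.atMost_Suc_shift diff_Suc_1 of_nat_0 mult_zero_right mult_zero_left add_0)
qed

lemma sum_choose_Suc_pascal:
  fixes a x :: "nat \<Rightarrow> real" and s :: real
  shows "(\<Sum>j\<le>Suc c. real (Suc c choose j)
            * ((real (Suc c) - real j) / real (Suc c) * a j + s * (real j / real (Suc c) * a (j - 1))) * x j)
       = (\<Sum>j\<le>c. real (c choose j) * a j * x j) + s * (\<Sum>j\<le>c. real (c choose j) * a j * x (Suc j))"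
proof -
  have "(\<Sum>j\<le>Suc c. real (Suc c choose j)
            * ((real (Suc c) - real j) / real (Suc c) * a j + s * (real j / real (Suc c) * a (j - 1))) * x j)
      = (\<Sum>j\<le>Suc c. real (Suc c choose j) * ((real (Suc c) - real j) / real (Suc c)) * (a j * x j))
        + s * (\<Sum>j\<le>Suc c. real (Suc c choose j) * (real j / real (Suc c)) * (a (j - 1) * x (Suc (j - 1))))"
    by (simp add: sum.distrib sum_distrib_left algebra_simps sum.atMost_Suc_shift del: sum.atMost_Suc)
  then show ?thesis
    unfolding sum_choose_Suc_comp_ratio sum_choose_Suc_ratio_shift[where g = "\<lambda>j. a j * x (Suc j)"]
    by (simp add: mult.assoc)
qed

theorem lemma4p3:
  fixes b :: nat and v :: "nat \<Rightarrow> real" and a :: "nat \<Rightarrow> real"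
  assumes "b \<ge> 1"
    and "\<forall>x :: nat \<Rightarrow> real. bform (b - 1) v x (uvec (b - 1))
           = (1 / 2 ^ (b - 1)) * (\<Sum>j\<le>b - 1. real (b - 1 choose j) * a j * x j)"
  shows "(\<forall>x :: nat \<Rightarrow> real. bform b (kron (2 ^ (b - 1)) u1 v) x (uvec b)
           = (1 / 2 ^ b) * (\<Sum>j\<le>b. real (b choose j)
               * ((real b - real j) / real b * a j + real j / real b * a (j - 1)) * x j))
      \<and> (\<forall>x :: nat \<Rightarrow> real. bform b (kron (2 ^ (b - 1)) w1 v) x (uvec b)
           = (1 / 2 ^ b) * (\<Sum>j\<le>b. real (b choose j)
               * ((real b - real j) / real b * a j - real j / real b * a (j - 1)) * x j))"
proof -
  obtain c where b: "b = Suc c" using assms(1) by (cases b) auto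
  have hyp: "bform c v x (uvec c) = (1 / 2 ^ c) * (\<Sum>j\<le>c. real (c choose j) * a j * x j)" for x
    using assms(2) b by simp
  have products: "u1 0 * u1 0 = 1/2" "u1 1 * u1 1 = 1/2" "w1 0 * u1 0 = 1/2" "w1 1 * u1 1 = -1/2"
    by (simp_all add: u1_def w1_def)
  have u: "bform (Suc c) (kron (2 ^ c) u1 v) x (uvec (Suc c))
      = 1/2 * bform c v x (uvec c) + 1/2 * bform c v (\<lambda>k. x (Suc k)) (uvec c)"
    and w: "bform (Suc c) (kron (2 ^ c) w1 v) x (uvec (Suc c))
      = 1/2 * bform c v x (uvec c) - 1/2 * bform c v (\<lambda>k. x (Suc k)) (uvec c)" for x
    unfolding uvec.simps bform_kron products by simp_all
  have plus: "(\<Sum>j\<le>Suc c. real (Suc c choose j)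
        * ((real (Suc c) - real j) / real (Suc c) * a j + real j / real (Suc c) * a (j - 1)) * x j)
      = (\<Sum>j\<le>c. real (c choose j) * a j * x j) + (\<Sum>j\<le>c. real (c choose j) * a j * x (Suc j))"
    and minus: "(\<Sum>j\<le>Suc c. real (Suc c choose j)
        * ((real (Suc c) - real j) / real (Suc c) * a j - real j / real (Suc c) * a (j - 1)) * x j)
      = (\<Sum>j\<le>c. real (c choose j) * a j * x j) - (\<Sum>j\<le>c. real (c choose j) * a j * x (Suc j))"
    for x
    using sum_choose_Suc_pascal[of c a 1 x] sum_choose_Suc_pascal[of c a "-1" x] by simp_all
  show ?thesis
    unfolding b diff_Suc_1
    by (intro conjI allI; simp only: u w plus minus hyp; simp add: field_simps)
qed

end
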